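(* Let $M=([n],\mathscr C)$ be a matroid and $C\in\mathscr C$ a circuit. The following are equivalent: (1) $C\in B_M$; (2) $\mathscr C\setminus\{C\}$ is not a tropical basis; (3) there is $x\in{\bf TP}^{n-1}$ such that $x\notin V(C)$ and $x\in V(C')$ for every circuit $C'\in\mathscr C\setminus\{C\}$.
   Context: Let ${\bf TP}^{n-1}$ be the tropical projective space over $(\mathbb R\cup\{-\infty\},\max,+)$. For a circuit $C$, $V(C)$ is the set of $x\in{\bf TP}^{n-1}$ such that $\max\{x_i:i\in C\}$ is attained at least twice. For $B\subseteq\mathscr C$, set $V(B)=\bigcap_{C\in B}V(C)$. A subset $B\subseteq\mathscr C$ is a tropical basis if $V(B)=V(\mathscr C)$. $B_M$ denotes the intersection of all tropical bases of $M$. *)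

theory Defs
  imports "HOL-Library.Extended_Real"
begin

definition matroid_circuits :: "nat \<Rightarrow> nat set set \<Rightarrow> bool" where
  "matroid_circuits n \<C> \<longleftrightarrow>
     (\<forall>C\<in>\<C>. C \<subseteq> {1..n}) \<and>
     {} \<notin> \<C> \<and>
     (\<forall>C1\<in>\<C>. \<forall>C2\<in>\<C>. C1 \<subseteq> C2 \<longrightarrow> C1 = C2) \<and>
     (\<forall>C1\<in>\<C>. \<forall>C2\<in>\<C>. \<forall>e. C1 \<noteq> C2 \<and> e \<in> C1 \<inter> C2 \<longrightarrow>
        (\<exists>C3\<in>\<C>. C3 \<subseteq> (C1 \<union> C2) - {e}))"

text \<open>Representatives of points of the tropical projective space TP^(n-1) over
  (R \<union> {-\<infinity>}, max, +): vectors indexed by [n] with entries in R \<union> {-\<infinity>},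
  not all -\<infinity>; coordinates outside [n] are fixed to -\<infinity>. The sets V(C)
  are invariant under tropical scaling, so working with representatives is harmless.\<close>
definition TP :: "nat \<Rightarrow> (nat \<Rightarrow> ereal) set" where
  "TP n = {x. (\<forall>i. x i \<noteq> \<infinity>) \<and> (\<exists>i\<in>{1..n}. x i \<noteq> -\<infinity>) \<and>
              (\<forall>i. i \<notin> {1..n} \<longrightarrow> x i = -\<infinity>)}"

definition Vc :: "nat \<Rightarrow> nat set \<Rightarrow> (nat \<Rightarrow> ereal) set" where
  "Vc n C = {x \<in> TP n. \<exists>i\<in>C. \<exists>j\<in>C. i \<noteq> j \<and>
              x i = Max (x ` C) \<and> x j = Max (x ` C)}"

definition VB :: "nat \<Rightarrow> nat set set \<Rightarrow> (nat \<Rightarrow> ereal) set" where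
  "VB n B = TP n \<inter> (\<Inter>C\<in>B. Vc n C)"

definition tropical_basis :: "nat \<Rightarrow> nat set set \<Rightarrow> nat set set \<Rightarrow> bool" where
  "tropical_basis n \<C> B \<longleftrightarrow> B \<subseteq> \<C> \<and> VB n B = VB n \<C>"

definition BM :: "nat \<Rightarrow> nat set set \<Rightarrow> nat set set" where
  "BM n \<C> = \<Inter>{B. tropical_basis n \<C> B}"

end

theory Submission
  imports Defs
begin

(* Tropical bases are closed upwards inside the set of circuits, so C lies in all of them
   exactly when the largest candidate avoiding C, namely all circuits but C, is not one.
   Since V(all circuits) = V(all circuits but C) \<inter> V(C), that candidate fails exactly when
   some point of V(all circuits but C) lies outside V(C). *)

lemma VB_antimono: "B \<subseteq> B' \<Longrightarrow> VB n B' \<subseteq> VB n B"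
  unfolding VB_def by blast

lemma VB_remove: "C \<in> \<C> \<Longrightarrow> VB n \<C> = VB n (\<C> - {C}) \<inter> Vc n C"
  unfolding VB_def by blast

lemma tropical_basis_mono:
  assumes "tropical_basis n \<C> B" and "B \<subseteq> B'" and "B' \<subseteq> \<C>"
  shows "tropical_basis n \<C> B'"
proof -
  have "VB n \<C> \<subseteq> VB n B'" using VB_antimono[OF \<open>B' \<subseteq> \<C>\<close>] .
  moreover have "VB n B' \<subseteq> VB n \<C>"
    using VB_antimono[OF \<open>B \<subseteq> B'\<close>] assms(1) unfolding tropical_basis_def by blast
  ultimately show ?thesis using \<open>B' \<subseteq> \<C>\<close> unfolding tropical_basis_def by blast
qed

lemma mem_BM_iff: "C \<in> BM n \<C> \<longleftrightarrow> \<not> tropical_basis n \<C> (\<C> - {C})"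
proof
  show "C \<in> BM n \<C> \<Longrightarrow> \<not> tropical_basis n \<C> (\<C> - {C})"
    unfolding BM_def by blast
next
  assume no_basis: "\<not> tropical_basis n \<C> (\<C> - {C})"
  have "C \<in> B" if basis: "tropical_basis n \<C> B" for B
  proof (rule ccontr)
    assume "C \<notin> B"
    with basis have "B \<subseteq> \<C> - {C}" unfolding tropical_basis_def by blast
    then have "tropical_basis n \<C> (\<C> - {C})"
      using tropical_basis_mono[OF basis] by blast
    with no_basis show False by contradiction
  qed
  then show "C \<in> BM n \<C>" unfolding BM_def by blast
qed

lemma not_tropical_basis_remove_iff:
  assumes "C \<in> \<C>"
  shows "\<not> tropical_basis n \<C> (\<C> - {C}) \<longleftrightarrow>
           (\<exists>x\<in>TP n. x \<notin> Vc n C \<and> (\<forall>C'\<in>\<C> - {C}. x \<in> Vc n C'))"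
  unfolding tropical_basis_def VB_remove[OF assms] by (auto simp: VB_def)

theorem lemma1:
  fixes n :: nat and \<C> :: "nat set set" and C :: "nat set"
  assumes "matroid_circuits n \<C>" and "C \<in> \<C>"
  shows "(C \<in> BM n \<C> \<longleftrightarrow> \<not> tropical_basis n \<C> (\<C> - {C})) \<and>
         (\<not> tropical_basis n \<C> (\<C> - {C}) \<longleftrightarrow>
           (\<exists>x\<in>TP n. x \<notin> Vc n C \<and> (\<forall>C'\<in>\<C> - {C}. x \<in> Vc n C')))"
  using mem_BM_iff not_tropical_basis_remove_iff[OF assms(2)] by (rule conjI)

end
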